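(* Fix a constant $h>0$. Consider a round $r$ in which every agent has a non-null adoption, i.e. $Z_0(r-1)=0$, so that $M=Nh\log N$ tokens are disseminated, of which $M_k=Z_k(r-1)\,h\log N$ carry arm $a_k$. Suppose the final positions of the tokens are independent and each token ends at each given agent $i$ with probability in $\left[\frac1N-\frac1{N^3},\frac1N+\frac1{N^3}\right]$, and agent $i$ sets $a_i(r)$ to the value of a uniformly random token among those ending at $i$ (and $a_i(r)=0$ if none). Then there is a sequence $\epsilon_N\to0$ (depending only on $N$ and $h$) such that for every agent $i$, every $k\in\{1,\dots,K\}$ and every such adoption profile $\mathcal X(r-1)$, $$\bigl|\mathbb P(a_i(r)=a_k\mid \mathcal X(r-1))-Q_k(r-1)\bigr|\le \epsilon_N\,Q_k(r-1);$$ in particular $\lim_{N\to\infty}\mathbb P(a_i(r)=a_k\mid\mathcal X(r-1))=Q_k(r-1)$.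
   Context: $N$ agents, $K$ arms. Each agent $i$ has adoption $\omega_i(r)\in\{0,1,\dots,K\}$ after round $r$ ($0$ means no preference). $Z_k(r)=|\{i:\omega_i(r)=k\}|$, $Q_k(r)=Z_k(r)/N$, and $\mathcal X(r)$ denotes the full adoption profile $(\omega_1(r),\dots,\omega_N(r))$. In the disseminating stage of round $r$, every agent with non-null adoption emits $h\log N$ tokens each carrying its current adoption. *)

theory Defs
  imports Complex_Main "HOL-Library.FuncSet"
begin

definition tok_per_agent :: "real \<Rightarrow> nat \<Rightarrow> nat" where
  "tok_per_agent h N = nat \<lceil>h * ln (real N)\<rceil>"

definition Zcount :: "nat \<Rightarrow> (nat \<Rightarrow> nat) \<Rightarrow> nat \<Rightarrow> nat" where
  "Zcount N \<omega> k = card {a. a < N \<and> \<omega> a = k}"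

definition Qfrac :: "nat \<Rightarrow> (nat \<Rightarrow> nat) \<Rightarrow> nat \<Rightarrow> real" where
  "Qfrac N \<omega> k = real (Zcount N \<omega> k) / real N"

text \<open>Agents are 0..N-1 with adoption profile \<omega>; each agent a emits L tokens,
  token j (j < N*L) is emitted by agent j div L and carries arm \<omega> (j div L).
  Token j ends at agent b with probability p j b, independently over tokens,
  so an outcome pos (final positions of all tokens) has probability
  prod_j p j (pos j).  Given the outcome, agent i picks a uniformly random token
  among those ending at i (probability of arm k = fraction of those tokens
  carrying k; 0 if no token ends at i, via x/0 = 0).\<close>
definition prob_adopt ::
  "nat \<Rightarrow> nat \<Rightarrow> (nat \<Rightarrow> nat) \<Rightarrow> (nat \<Rightarrow> nat \<Rightarrow> real) \<Rightarrow> nat \<Rightarrow> nat \<Rightarrow> real" where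
  "prob_adopt N L \<omega> p i k =
     (\<Sum>pos \<in> PiE {..<N*L} (\<lambda>_. {..<N}).
        (\<Prod>j<N*L. p j (pos j)) *
        (real (card {j \<in> {..<N*L}. pos j = i \<and> \<omega> (j div L) = k})
         / real (card {j \<in> {..<N*L}. pos j = i})))"

end

theory Submission
  imports Defs "HOL-Real_Asymp.Real_Asymp"
begin

text \<open>The adoption probability is the sum, over the tokens carrying arm \<open>k\<close>, of the probability
  \<open>\<pi>\<^sub>j\<close> that agent \<open>i\<close> picks token \<open>j\<close>. Conditioning on \<open>j\<close> landing at \<open>i\<close> gives
  \<open>\<pi>\<^sub>j = p\<^sub>j\<^sub>i \<bullet> E[1 / (1 + X\<^sub>j)]\<close>, where \<open>X\<^sub>j\<close> counts the other tokens at \<open>i\<close>; exchanging one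
  token for another changes that expectation by a factor at most \<open>1 + (c - a)\<close>, where \<open>[a, c]\<close>
  bounds the landing probabilities. So all \<open>\<pi>\<^sub>j\<close> agree up to the factor
  \<open>r = (c / a)(1 + (c - a)) \<longrightarrow> 1\<close>, and since they sum to \<open>1 - P(no token reaches i)\<close>, the
  arm-\<open>k\<close> tokens, a fraction \<open>Q\<^sub>k\<close> of all tokens, collect a share within a factor \<open>r\<close>
  of \<open>Q\<^sub>k\<close>. Finally \<open>P(no token reaches i) \<le> (1 - a)\<^bsup>N h log N\<^esup> \<le> N\<^bsup>-h/2\<^esup>\<close>.\<close>

definition token_expectation ::
  "('a \<Rightarrow> nat \<Rightarrow> real) \<Rightarrow> nat \<Rightarrow> 'a set \<Rightarrow> (('a \<Rightarrow> nat) \<Rightarrow> real) \<Rightarrow> real" where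
  "token_expectation p N A g = (\<Sum>pos \<in> PiE A (\<lambda>_. {..<N}). (\<Prod>j\<in>A. p j (pos j)) * g pos)"

definition count_at :: "'a set \<Rightarrow> nat \<Rightarrow> ('a \<Rightarrow> nat) \<Rightarrow> nat" where
  "count_at A i pos = card {j\<in>A. pos j = i}"

lemma token_expectation_insert:
  assumes "finite A" "j \<notin> A"
  shows "token_expectation p N (insert j A) g =
           (\<Sum>b<N. p j b * token_expectation p N A (\<lambda>pos. g (pos(j:=b))))"
proof -
  have "token_expectation p N (insert j A) g =
     (\<Sum>x \<in> {..<N} \<times> PiE A (\<lambda>_. {..<N}).
        (\<Prod>l\<in>insert j A. p l (((snd x)(j:=fst x)) l)) * g ((snd x)(j:=fst x)))"
    unfolding token_expectation_def PiE_insert_eq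
    by (subst sum.reindex[OF inj_combinator[OF assms(2)]]) (simp add: case_prod_beta)
  also have "\<dots> = (\<Sum>x \<in> {..<N} \<times> PiE A (\<lambda>_. {..<N}).
                    p j (fst x) * ((\<Prod>l\<in>A. p l (snd x l)) * g ((snd x)(j:=fst x))))"
  proof (rule sum.cong[OF refl])
    fix x :: "nat \<times> ('a \<Rightarrow> nat)"
    have "(\<Prod>l\<in>A. p l (((snd x)(j:=fst x)) l)) = (\<Prod>l\<in>A. p l (snd x l))"
      using assms(2) by (intro prod.cong) auto
    then show "(\<Prod>l\<in>insert j A. p l (((snd x)(j:=fst x)) l)) * g ((snd x)(j:=fst x)) =
               p j (fst x) * ((\<Prod>l\<in>A. p l (snd x l)) * g ((snd x)(j:=fst x)))"
      using assms by simp
  qed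
  also have "\<dots> = (\<Sum>b<N. p j b * token_expectation p N A (\<lambda>pos. g (pos(j:=b))))"
    unfolding token_expectation_def sum_distrib_left
    by (simp add: sum.cartesian_product case_prod_beta)
  finally show ?thesis .
qed

lemma token_expectation_nonneg:
  assumes "\<And>j b. j \<in> A \<Longrightarrow> b < N \<Longrightarrow> 0 \<le> p j b"
      and "\<And>pos. pos \<in> PiE A (\<lambda>_. {..<N}) \<Longrightarrow> 0 \<le> g pos"
  shows "0 \<le> token_expectation p N A g"
  unfolding token_expectation_def
  using assms by (intro sum_nonneg mult_nonneg_nonneg prod_nonneg) (auto simp: PiE_iff)

lemma token_expectation_zero [simp]: "token_expectation p N A (\<lambda>_. 0) = 0"
  unfolding token_expectation_def by simp

lemma token_expectation_diff:
  "token_expectation p N A (\<lambda>pos. f pos - g pos) = token_expectation p N A f - token_expectation p N A g"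
  unfolding token_expectation_def by (simp add: right_diff_distrib sum_subtractf)

lemma token_expectation_mono:
  assumes "\<And>j b. j \<in> A \<Longrightarrow> b < N \<Longrightarrow> 0 \<le> p j b"
      and "\<And>pos. pos \<in> PiE A (\<lambda>_. {..<N}) \<Longrightarrow> f pos \<le> g pos"
  shows "token_expectation p N A f \<le> token_expectation p N A g"
  using token_expectation_nonneg[of A N p "\<lambda>pos. g pos - f pos"] assms
  by (simp add: token_expectation_diff)

lemma token_expectation_sum:
  "token_expectation p N A (\<lambda>pos. \<Sum>j\<in>S. f j pos) = (\<Sum>j\<in>S. token_expectation p N A (f j))"
  unfolding token_expectation_def by (simp add: sum_distrib_left sum.swap[of _ S])

lemma token_expectation_cong:
  "(\<And>pos. pos \<in> PiE A (\<lambda>_. {..<N}) \<Longrightarrow> f pos = g pos) \<Longrightarrow>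
     token_expectation p N A f = token_expectation p N A g"
  unfolding token_expectation_def by (intro sum.cong) auto

lemma token_expectation_one:
  assumes "finite A" "\<And>j. j \<in> A \<Longrightarrow> (\<Sum>b<N. p j b) = 1"
  shows "token_expectation p N A (\<lambda>_. 1) = 1"
  using assms
  by (induction A rule: finite_induct) (simp_all add: token_expectation_def[of _ _ "{}"] token_expectation_insert)

lemma sum_mult_if_eq:
  fixes p :: "nat \<Rightarrow> real"
  assumes "(\<Sum>b<N. p b) = 1" "i < N"
  shows "(\<Sum>b<N. p b * (if b = i then x else y)) = p i * x + (1 - p i) * y"
proof -
  have "(\<Sum>b<N. p b * (if b = i then x else y)) = (\<Sum>b<N. p b * y + (if b = i then p b * (x - y) else 0))"
    by (intro sum.cong) (auto simp: algebra_simps)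
  also have "\<dots> = y + p i * (x - y)"
    using assms by (simp add: sum.distrib sum_distrib_right[symmetric])
  finally show ?thesis by (simp add: algebra_simps)
qed

lemma count_at_upd:
  assumes "finite A" "j \<notin> A"
  shows "count_at (insert j A) i (pos(j:=b)) = count_at A i pos + of_bool (b = i)"
proof -
  have "{l\<in>insert j A. (pos(j:=b)) l = i} =
          (if b = i then insert j {l\<in>A. pos l = i} else {l\<in>A. pos l = i})"
    using assms(2) by auto
  then show ?thesis unfolding count_at_def using assms by auto
qed

lemma token_expectation_insert_count:
  assumes "finite A" "j \<notin> A" "i < N" "(\<Sum>b<N. p j b) = 1"
  shows "token_expectation p N (insert j A) (\<lambda>pos. f (count_at (insert j A) i pos)) =
           p j i * token_expectation p N A (\<lambda>pos. f (count_at A i pos + 1)) +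
           (1 - p j i) * token_expectation p N A (\<lambda>pos. f (count_at A i pos))"
proof -
  have "token_expectation p N (insert j A) (\<lambda>pos. f (count_at (insert j A) i pos)) =
        (\<Sum>b<N. p j b * (if b = i then token_expectation p N A (\<lambda>pos. f (count_at A i pos + 1))
                                  else token_expectation p N A (\<lambda>pos. f (count_at A i pos))))"
    using assms(1,2) by (simp add: token_expectation_insert count_at_upd) (intro sum.cong, auto)
  then show ?thesis using sum_mult_if_eq[OF assms(4,3)] by simp
qed

definition pick_prob :: "('a \<Rightarrow> nat \<Rightarrow> real) \<Rightarrow> nat \<Rightarrow> 'a set \<Rightarrow> nat \<Rightarrow> 'a \<Rightarrow> real" where
  "pick_prob p N A i j = token_expectation p N A (\<lambda>pos. of_bool (pos j = i) / real (count_at A i pos))"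

definition inv_load :: "('a \<Rightarrow> nat \<Rightarrow> real) \<Rightarrow> nat \<Rightarrow> 'a set \<Rightarrow> nat \<Rightarrow> real" where
  "inv_load p N A i = token_expectation p N A (\<lambda>pos. 1 / (real (count_at A i pos) + 1))"

lemma inv_load_nonneg:
  assumes "\<And>l b. l \<in> A \<Longrightarrow> b < N \<Longrightarrow> 0 \<le> p l b"
  shows "0 \<le> inv_load p N A i"
  unfolding inv_load_def using assms by (intro token_expectation_nonneg) auto

lemma pick_prob_eq:
  assumes "finite A" "j \<in> A" "i < N"
  shows "pick_prob p N A i j = p j i * inv_load p N (A - {j}) i"
proof -
  define B where "B = A - {j}"
  have A: "A = insert j B" "finite B" "j \<notin> B" using assms unfolding B_def by auto
  have "pick_prob p N A i j =
        (\<Sum>b<N. p j b * (if b = i then token_expectation p N B (\<lambda>pos. 1 / (real (count_at B i pos) + 1))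
                           else 0))"
    unfolding pick_prob_def A(1) using A(2,3)
    by (simp add: token_expectation_insert count_at_upd)
       (intro sum.cong, auto intro: token_expectation_cong)
  then show ?thesis using assms(3) unfolding B_def inv_load_def by (simp add: if_distrib cong: if_cong)
qed

lemma sum_pick_prob:
  assumes "finite A" "\<And>j. j \<in> A \<Longrightarrow> (\<Sum>b<N. p j b) = 1"
  shows "(\<Sum>j\<in>A. pick_prob p N A i j) =
           1 - token_expectation p N A (\<lambda>pos. of_bool (count_at A i pos = 0))"
proof -
  have "(\<Sum>j\<in>A. of_bool (pos j = i) / real (count_at A i pos)) = 1 - of_bool (count_at A i pos = 0)"
    for pos
  proof -
    have "(\<Sum>j\<in>A. of_bool (pos j = i) :: real) = real (count_at A i pos)"
      unfolding count_at_def using assms(1) by (simp add: sum_of_bool_eq Int_def conj_commute)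
    then show ?thesis by (simp add: sum_divide_distrib[symmetric])
  qed
  then have "(\<Sum>j\<in>A. pick_prob p N A i j) =
               token_expectation p N A (\<lambda>pos. 1 - of_bool (count_at A i pos = 0))"
    unfolding pick_prob_def token_expectation_sum[symmetric] by simp
  then show ?thesis
    using token_expectation_one[OF assms] by (simp add: token_expectation_diff)
qed

lemma no_hit_prob_le:
  assumes "finite A" "i < N"
    and "\<And>j b. j \<in> A \<Longrightarrow> b < N \<Longrightarrow> 0 \<le> p j b" "\<And>j. j \<in> A \<Longrightarrow> (\<Sum>b<N. p j b) = 1"
    and "\<And>j. j \<in> A \<Longrightarrow> a \<le> p j i" "\<And>j. j \<in> A \<Longrightarrow> p j i \<le> 1"
  shows "token_expectation p N A (\<lambda>pos. of_bool (count_at A i pos = 0)) \<le> (1 - a) ^ card A"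
  using assms(1,3-)
proof (induction A rule: finite_induct)
  case empty
  then show ?case by (simp add: token_expectation_def count_at_def)
next
  case (insert j A)
  let ?E = "token_expectation p N A (\<lambda>pos. of_bool (count_at A i pos = 0))"
  have "0 \<le> ?E" using insert.prems by (intro token_expectation_nonneg) auto
  moreover have "?E \<le> (1 - a) ^ card A" using insert by auto
  moreover have "token_expectation p N (insert j A) (\<lambda>pos. of_bool (count_at (insert j A) i pos = 0))
                   = (1 - p j i) * ?E"
    using token_expectation_insert_count[of A j i N p "\<lambda>n. of_bool (n = 0)"] insert assms(2)
    by simp
  ultimately show ?case
    using insert by (simp add: mult_mono order.trans[of a "p j i" 1])
qed

lemma inv_load_remove_ratio:
  assumes "finite A" "j \<in> A" "j' \<in> A" "i < N"
    and "\<And>l b. l \<in> A \<Longrightarrow> b < N \<Longrightarrow> 0 \<le> p l b" "\<And>l. l \<in> A \<Longrightarrow> (\<Sum>b<N. p l b) = 1"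
    and "\<And>l. l \<in> A \<Longrightarrow> a \<le> p l i" "\<And>l. l \<in> A \<Longrightarrow> p l i \<le> c" "c \<le> 1"
  shows "inv_load p N (A - {j'}) i \<le> (1 + (c - a)) * inv_load p N (A - {j}) i"
proof (cases "j = j'")
  case True
  have "0 \<le> inv_load p N (A - {j}) i" using assms(5) by (intro inv_load_nonneg) auto
  moreover have "a \<le> c" using assms(2,7,8) by (meson order.trans)
  ultimately show ?thesis using True by (simp add: algebra_simps mult_right_mono)
next
  case False
  define B where "B = A - {j, j'}"
  have B: "finite B" "j \<notin> B" "j' \<notin> B" "A - {j} = insert j' B" "A - {j'} = insert j B"
    using assms(1-3) False unfolding B_def by auto
  define \<alpha> where "\<alpha> = token_expectation p N B (\<lambda>pos. 1 / (real (count_at B i pos) + 2))"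
  define \<beta> where "\<beta> = inv_load p N B i"
  have Ej: "inv_load p N (A - {j}) i = p j' i * \<alpha> + (1 - p j' i) * \<beta>"
    unfolding \<alpha>_def \<beta>_def inv_load_def B(4)
    using token_expectation_insert_count[OF B(1,3) assms(4), of p "\<lambda>n. 1 / (real n + 1)"] assms(3,6)
    by (simp add: add.commute)
  have Ej': "inv_load p N (A - {j'}) i = p j i * \<alpha> + (1 - p j i) * \<beta>"
    unfolding \<alpha>_def \<beta>_def inv_load_def B(5)
    using token_expectation_insert_count[OF B(1,2) assms(4), of p "\<lambda>n. 1 / (real n + 1)"] assms(2,6)
    by (simp add: add.commute)
  have nonneg: "\<And>l b. l \<in> B \<Longrightarrow> b < N \<Longrightarrow> 0 \<le> p l b" using assms(5) unfolding B_def by auto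
  have "\<alpha> \<le> \<beta>"
    unfolding \<alpha>_def \<beta>_def inv_load_def using nonneg
    by (intro token_expectation_mono) (auto simp: frac_le)
  text \<open>One extra token at \<open>i\<close> at most halves the reciprocal load.\<close>
  have "\<beta> - \<alpha> \<le> \<alpha>"
  proof -
    have "1 / (x + 1) - 1 / (x + 2) \<le> 1 / (x + 2)" if "0 \<le> x" for x :: real
    proof -
      have "1 / (x + 1) \<le> 2 / (x + 2)" using that by (simp add: divide_simps)
      then show ?thesis by (simp add: diff_divide_distrib add_divide_distrib[symmetric])
    qed
    then show ?thesis
      unfolding \<alpha>_def \<beta>_def inv_load_def token_expectation_diff[symmetric]
      using nonneg by (intro token_expectation_mono) auto
  qed
  have bounds: "a \<le> p j i" "p j i \<le> c" "a \<le> p j' i" "p j' i \<le> c" "p j' i \<le> 1"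
    using assms(2,3,7-9) by (auto intro: order.trans)
  have "\<alpha> \<le> inv_load p N (A - {j}) i"
    unfolding Ej using \<open>\<alpha> \<le> \<beta>\<close> bounds(5) mult_left_mono[of \<alpha> \<beta> "1 - p j' i"]
    by (simp add: algebra_simps)
  have "inv_load p N (A - {j'}) i - inv_load p N (A - {j}) i = (p j' i - p j i) * (\<beta> - \<alpha>)"
    unfolding Ej Ej' by (simp add: algebra_simps)
  also have "\<dots> \<le> (c - a) * (\<beta> - \<alpha>)"
    using bounds \<open>\<alpha> \<le> \<beta>\<close> by (intro mult_right_mono) auto
  also have "\<dots> \<le> (c - a) * \<alpha>"
    using bounds \<open>\<beta> - \<alpha> \<le> \<alpha>\<close> by (intro mult_left_mono) auto
  also have "\<dots> \<le> (c - a) * inv_load p N (A - {j}) i"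
    using bounds \<open>\<alpha> \<le> inv_load p N (A - {j}) i\<close> by (intro mult_left_mono) auto
  finally show ?thesis by (simp add: algebra_simps)
qed

lemma pick_prob_ratio_le:
  assumes "finite A" "j \<in> A" "j' \<in> A" "i < N"
    and "\<And>l b. l \<in> A \<Longrightarrow> b < N \<Longrightarrow> 0 \<le> p l b" "\<And>l. l \<in> A \<Longrightarrow> (\<Sum>b<N. p l b) = 1"
    and "\<And>l. l \<in> A \<Longrightarrow> a \<le> p l i" "\<And>l. l \<in> A \<Longrightarrow> p l i \<le> c" "0 < a" "c \<le> 1"
  shows "pick_prob p N A i j' \<le> c / a * (1 + (c - a)) * pick_prob p N A i j"
proof -
  let ?E = "\<lambda>l. inv_load p N (A - {l}) i"
  have E_nonneg: "0 \<le> ?E l" for l using assms(5) by (intro inv_load_nonneg) auto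
  have bounds: "a \<le> p j i" "a \<le> p j' i" "p j' i \<le> c" "a \<le> c"
    using assms(2,3,7,8) by (auto intro: order.trans)
  have "pick_prob p N A i j' = p j' i * ?E j'" by (rule pick_prob_eq[OF assms(1,3,4)])
  also have "\<dots> \<le> c * ((1 + (c - a)) * ?E j)"
    using inv_load_remove_ratio[OF assms(1-8,10)] bounds assms(9) E_nonneg
    by (intro mult_mono) auto
  also have "\<dots> = c / a * (1 + (c - a)) * (a * ?E j)"
    using assms(9) by simp
  also have "\<dots> \<le> c / a * (1 + (c - a)) * pick_prob p N A i j"
    unfolding pick_prob_eq[OF assms(1,2,4)]
    using bounds assms(9) E_nonneg by (intro mult_left_mono mult_right_mono) auto
  finally show ?thesis .
qed

lemma card_mult_sum_le:
  fixes F :: "'a \<Rightarrow> real"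
  assumes "finite A" "finite B" "\<And>a b. a \<in> A \<Longrightarrow> b \<in> B \<Longrightarrow> F b \<le> r * F a"
  shows "real (card A) * sum F B \<le> r * real (card B) * sum F A"
proof -
  have "real (card A) * sum F B = (\<Sum>a\<in>A. \<Sum>b\<in>B. F b)" by simp
  also have "\<dots> \<le> (\<Sum>a\<in>A. \<Sum>b\<in>B. r * F a)" using assms(3) by (intro sum_mono) auto
  also have "\<dots> = r * real (card B) * sum F A"
    by (simp add: sum_distrib_left[symmetric] sum_distrib_right[symmetric] mult.commute)
  finally show ?thesis .
qed

lemma card_div_preimage:
  "card {j. j < N * L \<and> P (j div L)} = L * card {a. a < N \<and> P a}"
proof -
  have "{j. j < N * L \<and> P (j div L)} = (\<lambda>(a, r). a * L + r) ` ({a. a < N \<and> P a} \<times> {..<L})"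
  proof (intro set_eqI iffI)
    fix j assume "j \<in> {j. j < N * L \<and> P (j div L)}"
    moreover from this have "0 < L" by (cases L) auto
    ultimately have "j div L < N" "P (j div L)" "j mod L < L" "j = j div L * L + j mod L"
      by (auto simp: less_mult_imp_div_less)
    then show "j \<in> (\<lambda>(a, r). a * L + r) ` ({a. a < N \<and> P a} \<times> {..<L})" by force
  next
    fix j assume "j \<in> (\<lambda>(a, r). a * L + r) ` ({a. a < N \<and> P a} \<times> {..<L})"
    then obtain a r where "j = a * L + r" "a < N" "P a" "r < L" by auto
    moreover have "a * L + r < Suc a * L" using \<open>r < L\<close> by simp
    moreover have "Suc a * L \<le> N * L" using \<open>a < N\<close> by (intro mult_le_mono1) simp
    ultimately show "j \<in> {j. j < N * L \<and> P (j div L)}" by simp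
  qed
  moreover have "inj_on (\<lambda>(a, r). a * L + r) ({a. a < N \<and> P a} \<times> {..<L})"
  proof (rule inj_onI, clarsimp)
    fix a r a' r' assume r: "r < L" "r' < L" and eq: "a * L + r = a' * L + r'"
    from r have "(a * L + r) div L = a" "(a * L + r) mod L = r"
      "(a' * L + r') div L = a'" "(a' * L + r') mod L = r'" by simp_all
    then show "a = a' \<and> r = r'" using eq by metis
  qed
  ultimately show ?thesis by (simp add: card_image card_cartesian_product)
qed

lemma abs_diff_le_of_ratio_bounds:
  fixes q r P0 e x :: real
  assumes "0 \<le> q" "1 \<le> r" "0 \<le> P0" "P0 \<le> e"
    and "q * (1 - P0) \<le> r * x" "x \<le> r * q * (1 - P0)"
  shows "\<bar>x - q\<bar> \<le> (r - 1 + e) * q"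
proof -
  have "r * q * (1 - P0) \<le> r * q * 1" using assms(1-3) by (intro mult_left_mono) auto
  then have "x \<le> r * q" using assms(6) by simp
  moreover have "0 \<le> e * q" using assms(1,3,4) by simp
  ultimately have "x - q \<le> (r - 1 + e) * q" by (simp add: algebra_simps)
  moreover have "q - x \<le> (r - 1 + e) * q"
  proof -
    have "r * (q - x) \<le> (r - 1 + P0) * q" using assms(5) by (simp add: algebra_simps)
    also have "\<dots> \<le> r * ((r - 1 + P0) * q)"
      using assms(1-3) mult_right_mono[of 1 r "(r - 1 + P0) * q"] by simp
    finally have "q - x \<le> (r - 1 + P0) * q" using assms(2) by simp
    also have "\<dots> \<le> (r - 1 + e) * q" using assms(1,4) by (simp add: mult_right_mono)
    finally show ?thesis .
  qed
  ultimately show ?thesis by linarith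
qed

lemma prob_adopt_eq_sum_pick_prob:
  "prob_adopt N L \<omega> p i k = (\<Sum>j \<in> {j. j < N * L \<and> \<omega> (j div L) = k}. pick_prob p N {..<N * L} i j)"
proof -
  let ?J = "{..<N * L}" and ?Jk = "{j. j < N * L \<and> \<omega> (j div L) = k}"
  have "real (card {j \<in> ?J. pos j = i \<and> \<omega> (j div L) = k}) = (\<Sum>j\<in>?Jk. of_bool (pos j = i))"
    for pos :: "nat \<Rightarrow> nat"
    by (simp add: sum_of_bool_eq Int_def conj_ac)
  then have "prob_adopt N L \<omega> p i k =
      token_expectation p N ?J (\<lambda>pos. \<Sum>j\<in>?Jk. of_bool (pos j = i) / real (count_at ?J i pos))"
    unfolding prob_adopt_def token_expectation_def count_at_def
    by (simp add: sum_divide_distrib[symmetric])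
  then show ?thesis unfolding token_expectation_sum pick_prob_def .
qed

lemma prob_adopt_ratio_bounds:
  fixes N L i :: nat and p :: "nat \<Rightarrow> nat \<Rightarrow> real" and a c :: real
  defines "J \<equiv> {..<N * L}"
  defines "P0 \<equiv> token_expectation p N J (\<lambda>pos. of_bool (count_at J i pos = 0))"
    and "r \<equiv> c / a * (1 + (c - a))"
  assumes "0 < L" "i < N" "0 < a" "c \<le> 1"
    and "\<And>j b. j < N * L \<Longrightarrow> b < N \<Longrightarrow> 0 \<le> p j b" "\<And>j. j < N * L \<Longrightarrow> (\<Sum>b<N. p j b) = 1"
    and "\<And>j. j < N * L \<Longrightarrow> a \<le> p j i" "\<And>j. j < N * L \<Longrightarrow> p j i \<le> c"
  shows "prob_adopt N L \<omega> p i k \<le> r * Qfrac N \<omega> k * (1 - P0)"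
    and "Qfrac N \<omega> k * (1 - P0) \<le> r * prob_adopt N L \<omega> p i k"
proof -
  define Jk where "Jk = {j. j < N * L \<and> \<omega> (j div L) = k}"
  let ?F = "pick_prob p N J i" and ?Z = "real (Zcount N \<omega> k)"
  have prob: "prob_adopt N L \<omega> p i k = sum ?F Jk"
    unfolding prob_adopt_eq_sum_pick_prob Jk_def J_def ..
  have JkJ: "Jk \<subseteq> J" and card_J: "card J = N * L" unfolding J_def Jk_def by auto
  have card_Jk: "card Jk = L * Zcount N \<omega> k"
    unfolding Jk_def Zcount_def by (rule card_div_preimage[of N L "\<lambda>a. \<omega> a = k"])
  have ratio: "?F j' \<le> r * ?F j" if "j \<in> J" "j' \<in> J" for j j'
    unfolding r_def by (rule pick_prob_ratio_le) (use that assms in \<open>auto simp: J_def\<close>)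
  have total: "sum ?F J = 1 - P0"
    unfolding P0_def by (rule sum_pick_prob) (auto simp: J_def assms(9))
  have "real L * (real N * sum ?F Jk) \<le> real L * (r * ?Z * (1 - P0))"
    using card_mult_sum_le[of J Jk ?F r] JkJ ratio
    unfolding card_J card_Jk total by (auto simp: J_def ac_simps intro: finite_subset)
  then have "real N * sum ?F Jk \<le> r * ?Z * (1 - P0)" using assms(4) by simp
  then show "prob_adopt N L \<omega> p i k \<le> r * Qfrac N \<omega> k * (1 - P0)"
    using assms(5) unfolding prob Qfrac_def by (simp add: field_simps)
  have "real L * (?Z * (1 - P0)) \<le> real L * (r * (real N * sum ?F Jk))"
    using card_mult_sum_le[of Jk J ?F r] JkJ ratio
    unfolding card_J card_Jk total by (auto simp: J_def ac_simps intro: finite_subset)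
  then have "?Z * (1 - P0) \<le> r * (real N * sum ?F Jk)" using assms(4) by simp
  then show "Qfrac N \<omega> k * (1 - P0) \<le> r * prob_adopt N L \<omega> p i k"
    using assms(5) unfolding prob Qfrac_def by (simp add: field_simps)
qed

lemma prob_adopt_relative_error:
  assumes "i < N" "0 < a" "a \<le> c" "c \<le> 1"
    and "\<And>j b. j < N * L \<Longrightarrow> b < N \<Longrightarrow> 0 \<le> p j b" "\<And>j. j < N * L \<Longrightarrow> (\<Sum>b<N. p j b) = 1"
    and "\<And>j. j < N * L \<Longrightarrow> a \<le> p j i" "\<And>j. j < N * L \<Longrightarrow> p j i \<le> c"
  shows "\<bar>prob_adopt N L \<omega> p i k - Qfrac N \<omega> k\<bar>
           \<le> (c / a * (1 + (c - a)) - 1 + (1 - a) ^ (N * L)) * Qfrac N \<omega> k"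
proof -
  define r where "r = c / a * (1 + (c - a))"
  have "1 * 1 \<le> c / a * (1 + (c - a))" using assms(2,3) by (intro mult_mono) auto
  then have "1 \<le> r" unfolding r_def by simp
  have "0 \<le> Qfrac N \<omega> k" unfolding Qfrac_def by simp
  show ?thesis
  proof (cases "L = 0")
    case True
    have "prob_adopt N L \<omega> p i k = 0" using True by (simp add: prob_adopt_def)
    moreover have "Qfrac N \<omega> k \<le> r * Qfrac N \<omega> k"
      using mult_right_mono[OF \<open>1 \<le> r\<close> \<open>0 \<le> Qfrac N \<omega> k\<close>] by simp
    ultimately show ?thesis using True \<open>0 \<le> Qfrac N \<omega> k\<close> by (simp add: r_def)
  next
    case False
    define P0 where "P0 = token_expectation p N {..<N * L} (\<lambda>pos. of_bool (count_at {..<N * L} i pos = 0))"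
    have "0 \<le> P0" unfolding P0_def using assms(5) by (intro token_expectation_nonneg) auto
    moreover have "P0 \<le> (1 - a) ^ (N * L)"
      unfolding P0_def using assms(1,4-8)
      by (intro no_hit_prob_le[of "{..<N * L}", simplified]) (auto intro: order.trans[of _ c])
    moreover note prob_adopt_ratio_bounds[of L i N a c p \<omega> k] False assms
    ultimately show ?thesis
      using abs_diff_le_of_ratio_bounds[OF \<open>0 \<le> Qfrac N \<omega> k\<close> \<open>1 \<le> r\<close>, of P0]
      unfolding r_def P0_def by auto
  qed
qed

lemma no_hit_bound_le_powr:
  assumes "2 \<le> N" "h * ln (real N) \<le> real L"
  shows "(1 - (1 / real N - 1 / real N ^ 3)) ^ (N * L) \<le> real N powr (- h / 2)"
proof -
  define a where "a = 1 / real N - 1 / real N ^ 3"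
  have N: "2 \<le> real N" using assms(1) by simp
  have "a * real N = 1 - 1 / real N ^ 2"
    unfolding a_def using N by (simp add: field_simps power2_eq_square power3_eq_cube)
  moreover have "1 / real N ^ 2 \<le> 1 / 2"
    using N power_mono[OF N, of 2] by (simp add: divide_simps)
  ultimately have aN: "1 / 2 \<le> a * real N" by simp
  have "(1 - a) ^ (N * L) \<le> exp (- a) ^ (N * L)"
  proof (rule power_mono)
    have "0 \<le> a * real N" using aN by simp
    then have "0 \<le> a" using N by (simp add: zero_le_mult_iff)
    moreover have "a \<le> 1 / real N" unfolding a_def by simp
    moreover have "1 / real N \<le> 1" using N by simp
    ultimately show "0 \<le> 1 - a" by linarith
  qed (rule exp_ge_add_one_self[of "- a", simplified])
  also have "\<dots> = exp (- (a * real N) * real L)" by (simp add: exp_of_nat_mult[symmetric] ac_simps)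
  also have "\<dots> \<le> exp (- (h / 2) * ln (real N))"
    using aN assms(2) mult_right_mono[OF aN, of "real L"] by simp
  also have "\<dots> = real N powr (- h / 2)" using N by (simp add: powr_def)
  finally show ?thesis unfolding a_def .
qed

text \<open>For \<open>N = 1\<close> no token is emitted (\<open>h ln 1 = 0\<close>), so the agent ends with no adoption.\<close>
definition adoption_error :: "real \<Rightarrow> nat \<Rightarrow> real" where
  "adoption_error h N =
     (if N < 2 then 1
      else (1 / real N + 1 / real N ^ 3) / (1 / real N - 1 / real N ^ 3) * (1 + 2 / real N ^ 3) - 1
           + real N powr (- h / 2))"

lemma adoption_error_tendsto_zero:
  assumes "0 < h"
  shows "adoption_error h \<longlonglongrightarrow> 0"
proof -
  have "((\<lambda>x::real. (1 / x + 1 / x ^ 3) / (1 / x - 1 / x ^ 3) * (1 + 2 / x ^ 3) - 1 + x powr (- h / 2))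
          \<longlongrightarrow> 0) at_top"
    using assms by real_asymp
  then have "(\<lambda>N. (1 / real N + 1 / real N ^ 3) / (1 / real N - 1 / real N ^ 3) * (1 + 2 / real N ^ 3) - 1
                 + real N powr (- h / 2)) \<longlonglongrightarrow> 0"
    by (rule filterlim_compose[OF _ filterlim_real_sequentially])
  moreover have "eventually (\<lambda>N. (1 / real N + 1 / real N ^ 3) / (1 / real N - 1 / real N ^ 3) *
                   (1 + 2 / real N ^ 3) - 1 + real N powr (- h / 2) = adoption_error h N) sequentially"
    using eventually_ge_at_top[of 2] by eventually_elim (simp add: adoption_error_def)
  ultimately show ?thesis by (rule Lim_transform_eventually)
qed

lemma prob_adopt_error_le:
  assumes "0 < h" "i < N"
    and "\<And>j b. j < N * tok_per_agent h N \<Longrightarrow> b < N \<Longrightarrow>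
           1 / real N - 1 / real N ^ 3 \<le> p j b \<and> p j b \<le> 1 / real N + 1 / real N ^ 3"
    and "\<And>j. j < N * tok_per_agent h N \<Longrightarrow> (\<Sum>b<N. p j b) = 1"
  shows "\<bar>prob_adopt N (tok_per_agent h N) \<omega> p i k - Qfrac N \<omega> k\<bar>
           \<le> adoption_error h N * Qfrac N \<omega> k"
proof (cases "N < 2")
  case True
  then have "N = 1" using assms(2) by simp
  then have "tok_per_agent h N = 0" by (simp add: tok_per_agent_def)
  then show ?thesis
    using prob_adopt_relative_error[of i N 1 1 "tok_per_agent h N" p \<omega> k] assms(2) \<open>N = 1\<close>
    by (simp add: adoption_error_def)
next
  case False
  define a where "a = 1 / real N - 1 / real N ^ 3"
  define c where "c = 1 / real N + 1 / real N ^ 3"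
  have N: "2 \<le> real N" using False by simp
  have "1 / real N ^ 3 < 1 / real N"
    using N power_strict_increasing[of 1 3 "real N"] by (simp add: divide_simps)
  then have "0 < a" unfolding a_def by simp
  have "1 / real N ^ 3 \<le> 1 / 2" "1 / real N \<le> 1 / 2"
    using N power_mono[OF N, of 3] by (simp_all add: divide_simps)
  then have "c \<le> 1" unfolding c_def by simp
  have "a \<le> c" unfolding a_def c_def by simp
  have "\<bar>prob_adopt N (tok_per_agent h N) \<omega> p i k - Qfrac N \<omega> k\<bar>
          \<le> (c / a * (1 + (c - a)) - 1 + (1 - a) ^ (N * tok_per_agent h N)) * Qfrac N \<omega> k"
    using \<open>0 < a\<close> \<open>a \<le> c\<close> \<open>c \<le> 1\<close> assms(2-4)[folded a_def c_def]
    by (intro prob_adopt_relative_error) (auto intro: order.trans[of 0 a])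
  also have "\<dots> \<le> adoption_error h N * Qfrac N \<omega> k"
  proof (rule mult_right_mono)
    have "h * ln (real N) \<le> real (tok_per_agent h N)"
      unfolding tok_per_agent_def by linarith
    then have "(1 - a) ^ (N * tok_per_agent h N) \<le> real N powr (- h / 2)"
      unfolding a_def using False by (intro no_hit_bound_le_powr) auto
    then show "c / a * (1 + (c - a)) - 1 + (1 - a) ^ (N * tok_per_agent h N) \<le> adoption_error h N"
      using False unfolding adoption_error_def a_def c_def by simp
  qed (simp add: Qfrac_def)
  finally show ?thesis .
qed

theorem lemma1:
  fixes h :: real
  assumes "h > 0"
  shows "\<exists>\<epsilon> :: nat \<Rightarrow> real. \<epsilon> \<longlonglongrightarrow> 0 \<and>
    (\<forall>(N::nat) (K::nat) (\<omega>::nat \<Rightarrow> nat) (p::nat \<Rightarrow> nat \<Rightarrow> real) (i::nat) (k::nat).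
       (\<forall>a<N. \<omega> a \<in> {1..K}) \<and>
       (\<forall>j<N * tok_per_agent h N.
          (\<forall>b<N. 1 / real N - 1 / real N ^ 3 \<le> p j b \<and> p j b \<le> 1 / real N + 1 / real N ^ 3) \<and>
          (\<Sum>b<N. p j b) = 1) \<and>
       i < N \<and> k \<in> {1..K}
       \<longrightarrow> \<bar>prob_adopt N (tok_per_agent h N) \<omega> p i k - Qfrac N \<omega> k\<bar>
             \<le> \<epsilon> N * Qfrac N \<omega> k)"
proof (intro exI conjI allI impI)
  show "adoption_error h \<longlonglongrightarrow> 0" using assms by (rule adoption_error_tendsto_zero)
next
  fix N K i k :: nat and \<omega> :: "nat \<Rightarrow> nat" and p :: "nat \<Rightarrow> nat \<Rightarrow> real"
  assume "(\<forall>a<N. \<omega> a \<in> {1..K}) \<and>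
       (\<forall>j<N * tok_per_agent h N.
          (\<forall>b<N. 1 / real N - 1 / real N ^ 3 \<le> p j b \<and> p j b \<le> 1 / real N + 1 / real N ^ 3) \<and>
          (\<Sum>b<N. p j b) = 1) \<and>
       i < N \<and> k \<in> {1..K}"
  then show "\<bar>prob_adopt N (tok_per_agent h N) \<omega> p i k - Qfrac N \<omega> k\<bar>
               \<le> adoption_error h N * Qfrac N \<omega> k"
    using assms by (intro prob_adopt_error_le) auto
qed

end
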